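(* Assume $(q+1)/d=3$, let $r$ be an integer, $a,b\in\mathbb F_{q^2}^*$, $0\le j_1,j_2<d$, and put $h(X)=1+aX^{1+3j_1}+bX^{2+3j_2}$ and $L_k(X)=1+a\epsilon^{j_1k}X+b\epsilon^{j_2k}X^2$ for $0\le k<d$. Suppose that for every $0\le k<d$ there exist $\tau_k\in\{0,1,2\}$ and $\lambda_k\in\mu_{q+1}$ with $L_k\in\mathcal L_k(2,\tau_k;\lambda_k)$, and that $\gcd(e_k,3)=1$ where $e_k=r-2+\tau_k$. Define $\pi(k)\in\mathbb Z/d\mathbb Z$ by $\lambda_k^3=\epsilon^{\pi(k)}$, and $K_0=\{k:\tau_k=0\}$, $K_1=\{k:\tau_k=2\}$. If $K_0\neq\emptyset$ and $K_1\ne\emptyset$, then $r\equiv1\pmod3$, $d$ is even, $K_0$ and $K_1$ are the two cosets of $2\mathbb Z/d\mathbb Z$ in $\mathbb Z/d\mathbb Z$, $a^3=-1$, $b=\pm a^2$, $2j_1-j_2\equiv d/2\pmod d$, $j_1+j_2+1\equiv d/2\pmod d$, and $\pi(k)+e_kk=rk$ in $\mathbb Z/d\mathbb Z$ for all $k$. Moreover, either $q\equiv11\pmod{18}$ and $h(X)=1+aX^{(q+1)/3}+bX^{(q+1)/6}$, or $q\equiv5\pmod{18}$ and $h(X)=1+aX^{2(q+1)/3}+bX^{5(q+1)/6}$.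
   Context: $q$ is a prime power, $d$ is a positive divisor of $q+1$, and $\epsilon\in\mathbb F_{q^2}^*$ has multiplicative order $d$. $\mu_{q+1}$ is the subgroup of order $q+1$ of $\mathbb F_{q^2}^*$. For $a\in\mathbb F_{q^2}$, $\bar a=a^q$; for $f(X)=\sum_{i=0}^n a_iX^i\in\mathbb F_{q^2}[X]$ with $a_n\neq0$, $\tilde f(X)=\sum_{i=0}^n\bar a_iX^{n-i}$. For $0\le k<d$, $0\le t<(q+1)/d$ and $\lambda\in\mu_{q+1}$: $\mathcal L_k(t,0;\lambda)$ is the set of $L\in\mathbb F_{q^2}[X]$ with $\deg L=t$, $\tilde L=\lambda L$ and $\gcd(L,X^{(q+1)/d}-\epsilon^k)=1$; for an integer $\tau$ with $(q+1)/d-t\le\tau\le t$, $\mathcal L_k(t,\tau;\lambda)$ is the set of $L=P+X^{(q+1)/d-\tau}Q$ with $P,Q\in\mathbb F_{q^2}[X]$, $\deg P=t-\tau$, $\tilde P=\lambda P$, $\deg Q=\tau+t-(q+1)/d$, $\tilde Q=\lambda\epsilon^kQ$, and $\gcd(L,X^{(q+1)/d}-\epsilon^k)=1$. *)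

theory Defs
  imports "HOL-Computational_Algebra.Computational_Algebra" "HOL-Number_Theory.Cong"
begin

definition has_mult_order :: "'a::field \<Rightarrow> nat \<Rightarrow> bool" where
  "has_mult_order x n \<longleftrightarrow> n > 0 \<and> x ^ n = 1 \<and> (\<forall>m. 0 < m \<and> m < n \<longrightarrow> x ^ m \<noteq> 1)"

definition mu :: "nat \<Rightarrow> 'a::field set" where
  "mu n = {x. x ^ n = 1}"

text \<open>tilde f = sum_i conj(a_i) X^(n-i), with conj a = a^q and n = deg f.\<close>
definition tilde :: "nat \<Rightarrow> 'a::field poly \<Rightarrow> 'a poly" where
  "tilde q f = (\<Sum>i\<le>degree f. monom (coeff f i ^ q) (degree f - i))"

text \<open>The sets L_k(t,tau;lambda); here N = (q+1)/d.  Polynomials of a prescribed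
  degree are nonzero (deg 0 = -infinity convention).\<close>
definition Lset :: "nat \<Rightarrow> nat \<Rightarrow> 'a::field_gcd \<Rightarrow> nat \<Rightarrow> nat \<Rightarrow> nat \<Rightarrow> 'a \<Rightarrow> 'a poly set" where
  "Lset q d eps k t tau lam =
    (let N = (q + 1) div d; G = monom 1 N - [:eps ^ k:] in
     if tau = 0 then
       {L. L \<noteq> 0 \<and> degree L = t \<and> tilde q L = smult lam L \<and> gcd L G = 1}
     else
       {L. N - t \<le> tau \<and> tau \<le> t \<and>
           (\<exists>P Q. L = P + monom 1 (N - tau) * Q \<and>
                  P \<noteq> 0 \<and> degree P = t - tau \<and> tilde q P = smult lam P \<and>
                  Q \<noteq> 0 \<and> degree Q = tau + t - N \<and> tilde q Q = smult (lam * eps ^ k) Q) \<and>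
           gcd L G = 1})"

end

theory Submission
  imports Defs
begin

text \<open>Write L_k = 1 + \<alpha>_k X + \<beta>_k X^2. Comparing coefficients in the
  self-reciprocity conditions, and using a, b \<in> \<mu>(q+1), one finds that \<tau>_k = 0 forces
  \<beta>_k = \<alpha>_k^2 and \<tau>_k = 2 forces \<alpha>_k \<beta>_k \<epsilon>^k = 1, while \<tau>_k = 1 is excluded by
  gcd(e_k, 3) = 1. Both relations at once would make L_k divide X^3 - \<epsilon>^k. Each relation
  has the shape c u^k = 1 and is d-periodic in k; holding at two consecutive k it would hold
  for all k, which is impossible as K_0 and K_1 are both nonempty. So the relations
  alternate, d is even and both ratios u equal -1. This gives a^3 = -1, b = \<plusminus>a^2,
  \<epsilon>^(3 j_1 + 1) = 1 and the congruences for j_1, j_2; since then 3 j_1 + 1 is d or 2d,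
  they determine q modulo 18 and the exponents of h.\<close>

lemma coeff_tilde:
  "coeff (tilde q f) i = (if i \<le> degree f then coeff f (degree f - i) ^ q else 0)"
proof -
  have "coeff (tilde q f) i =
      (\<Sum>j\<le>degree f. if j = degree f - i \<and> i \<le> degree f then coeff f j ^ q else 0)"
    unfolding tilde_def coeff_sum coeff_monom by (intro sum.cong) auto
  also have "\<dots> = (if i \<le> degree f then coeff f (degree f - i) ^ q else 0)"
    by (cases "i \<le> degree f") (simp_all add: sum.delta)
  finally show ?thesis .
qed

lemma Lset_gcd_eq_1:
  "L \<in> Lset q d eps k t tau lam \<Longrightarrow> gcd L (monom 1 ((q + 1) div d) - [:eps ^ k:]) = 1"
  by (auto simp: Lset_def Let_def split: if_splits)

lemma quadratic_Lset_tau0: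
  fixes \<alpha> \<beta> lam eps :: "'a::field_gcd"
  assumes L: "[:1, \<alpha>, \<beta>:] \<in> Lset q d eps k 2 0 lam" and "\<beta> \<noteq> 0"
  shows "lam * \<beta> = 1" and "\<beta> ^ (q + 1) = 1" and "\<alpha> ^ (q + 1) = 1 \<Longrightarrow> \<beta> = \<alpha> ^ 2"
proof -
  have deg: "degree [:1, \<alpha>, \<beta>:] = 2" using \<open>\<beta> \<noteq> 0\<close> by simp
  note [simp] = \<open>\<beta> \<noteq> 0\<close>
  from L have t: "tilde q [:1, \<alpha>, \<beta>:] = smult lam [:1, \<alpha>, \<beta>:]"
    unfolding Lset_def Let_def by auto
  have "coeff (tilde q [:1, \<alpha>, \<beta>:]) 2 = 1" by (simp add: coeff_tilde deg)
  with t show lb: "lam * \<beta> = 1" by (simp add: numeral_2_eq_2)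
  have "coeff (tilde q [:1, \<alpha>, \<beta>:]) 0 = \<beta> ^ q" by (simp add: coeff_tilde deg)
  with t lb show "\<beta> ^ (q + 1) = 1" by (simp add: mult.commute)
  have "coeff (tilde q [:1, \<alpha>, \<beta>:]) 1 = \<alpha> ^ q" by (simp add: coeff_tilde deg)
  with t have "\<alpha> ^ (q + 1) = lam * \<alpha> ^ 2" by (simp add: power2_eq_square)
  moreover assume "\<alpha> ^ (q + 1) = 1"
  ultimately have "lam * \<alpha> ^ 2 = lam * \<beta>" using lb by simp
  moreover have "lam \<noteq> 0" using lb by auto
  ultimately show "\<beta> = \<alpha> ^ 2" by simp
qed

lemma quadratic_Lset_tau2:
  fixes \<alpha> \<beta> lam eps :: "'a::field_gcd"
  assumes L: "[:1, \<alpha>, \<beta>:] \<in> Lset q d eps k 2 2 lam" and N: "(q + 1) div d = 3"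
  shows "lam = 1" and "\<beta> ^ (q + 1) = 1 \<Longrightarrow> \<alpha> * \<beta> * eps ^ k = 1"
proof -
  from L obtain P Q where LPQ: "[:1, \<alpha>, \<beta>:] = P + monom 1 1 * Q"
    and P: "degree P = 0" "tilde q P = smult lam P"
    and Q: "degree Q = 1" "tilde q Q = smult (lam * eps ^ k) Q"
    unfolding Lset_def Let_def N by auto
  have cL: "coeff [:1, \<alpha>, \<beta>:] i = coeff P i + (if i < 1 then 0 else coeff Q (i - 1))" for i
    by (subst LPQ) (simp add: coeff_monom_mult)
  have "coeff P 1 = 0" "coeff P 2 = 0" using P(1) by (simp_all add: coeff_eq_0)
  hence p0: "coeff P 0 = 1" and q0: "coeff Q 0 = \<alpha>" and q1: "coeff Q 1 = \<beta>"
    using cL[of 0] cL[of 1] cL[of 2] by (simp_all add: numeral_2_eq_2)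
  have "coeff (tilde q P) 0 = 1" using p0 P(1) by (simp add: coeff_tilde)
  thus lam: "lam = 1" using P(2) p0 by simp
  have "coeff (tilde q Q) 0 = \<beta> ^ q" using q1 Q(1) by (simp add: coeff_tilde)
  hence "\<beta> ^ q = eps ^ k * \<alpha>" using Q(2) q0 lam by simp
  moreover assume "\<beta> ^ (q + 1) = 1"
  ultimately show "\<alpha> * \<beta> * eps ^ k = 1" by (simp add: mult_ac)
qed

lemma quadratic_dvd_X3_minus:
  fixes \<alpha> e :: "'a::field"
  assumes "\<alpha> ^ 3 * e = 1"
  shows "[:1, \<alpha>, \<alpha> ^ 2:] dvd monom 1 3 - [:e:]"
proof -
  have "\<alpha> \<noteq> 0" using assms by auto
  have X3: "monom (1::'a) 3 = [:0, 0, 0, 1:]"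
    by (simp add: monom_Suc numeral_3_eq_3 monom_0 one_pCons)
  have "[:1, \<alpha>, \<alpha> ^ 2:] * [:1, -\<alpha>:] = smult (- (\<alpha> ^ 3)) (monom 1 3 - [:e:])"
    using assms by (simp add: X3 algebra_simps power2_eq_square power3_eq_cube)
  hence "monom 1 3 - [:e:] = smult (- inverse (\<alpha> ^ 3)) ([:1, \<alpha>, \<alpha> ^ 2:] * [:1, -\<alpha>:])"
    using \<open>\<alpha> \<noteq> 0\<close> by simp
  thus ?thesis by (metis dvd_smult dvd_triv_left)
qed

lemma quadratic_gcd_X3_minus_neq_1:
  fixes \<alpha> e :: "'a::field_gcd"
  assumes "\<alpha> ^ 3 * e = 1"
  shows "gcd [:1, \<alpha>, \<alpha> ^ 2:] (monom 1 3 - [:e:]) \<noteq> 1"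
proof
  assume "gcd [:1, \<alpha>, \<alpha> ^ 2:] (monom 1 3 - [:e:]) = 1"
  moreover have "[:1, \<alpha>, \<alpha> ^ 2:] dvd gcd [:1, \<alpha>, \<alpha> ^ 2:] (monom 1 3 - [:e:])"
    using quadratic_dvd_X3_minus[OF assms] by simp
  ultimately have "is_unit [:1, \<alpha>, \<alpha> ^ 2:]" by simp
  moreover have "\<alpha> \<noteq> 0" using assms by auto
  ultimately show False by (simp add: is_unit_iff_degree)
qed

lemma has_mult_order_power_eq_1_iff:
  fixes e :: "'a::field"
  assumes "has_mult_order e d"
  shows "e ^ m = 1 \<longleftrightarrow> d dvd m"
proof -
  have d: "d > 0" "e ^ d = 1" and min: "\<And>m. 0 < m \<Longrightarrow> m < d \<Longrightarrow> e ^ m \<noteq> 1"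
    using assms unfolding has_mult_order_def by auto
  have "e ^ m = e ^ (d * (m div d) + m mod d)" by simp
  also have "\<dots> = e ^ (m mod d)" using d by (simp only: power_add power_mult) simp
  finally have split: "e ^ m = e ^ (m mod d)" .
  show ?thesis
  proof
    assume "e ^ m = 1"
    hence "e ^ (m mod d) = 1" using split by simp
    hence "m mod d = 0" using min[of "m mod d"] d by (meson mod_less_divisor neq0_conv)
    thus "d dvd m" by auto
  qed (use split d in auto)
qed

lemma has_mult_order_power_eq_power_iff:
  fixes e :: "'a::field"
  assumes "has_mult_order e d"
  shows "e ^ m = e ^ n \<longleftrightarrow> [int m = int n] (mod int d)"
proof -
  have "e \<noteq> 0" using assms unfolding has_mult_order_def by (auto simp: zero_power)
  have le: "e ^ m = e ^ n \<longleftrightarrow> [m = n] (mod d)" if "n \<le> m" for m n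
  proof -
    have "e ^ m = e ^ n * e ^ (m - n)" using that by (simp flip: power_add)
    hence "e ^ m = e ^ n \<longleftrightarrow> e ^ (m - n) = 1" using \<open>e \<noteq> 0\<close> by auto
    also have "\<dots> \<longleftrightarrow> [m = n] (mod d)"
      using that by (simp add: has_mult_order_power_eq_1_iff[OF assms] cong_altdef_nat)
    finally show ?thesis .
  qed
  have "e ^ m = e ^ n \<longleftrightarrow> [m = n] (mod d)"
    using le[of n m] le[of m n] by (cases "n \<le> m") (auto simp: cong_sym_eq)
  thus ?thesis by (simp add: cong_int_iff)
qed

lemma has_mult_order_power_mod:
  fixes e :: "'a::field"
  assumes "has_mult_order e d"
  shows "e ^ (n mod d) = e ^ n"
  by (simp add: has_mult_order_power_eq_power_iff[OF assms] cong_def zmod_int)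

lemma has_mult_order_power_half:
  fixes e :: "'a::field"
  assumes "has_mult_order e d" and "even d"
  shows "e ^ (d div 2) = -1"
proof -
  have "(e ^ (d div 2)) ^ 2 = 1"
    using assms by (simp add: has_mult_order_power_eq_1_iff flip: power_mult)
  moreover have "e ^ (d div 2) \<noteq> 1"
    using assms has_mult_order_def[of e d] by (simp add: has_mult_order_power_eq_1_iff) (auto elim!: evenE)
  ultimately show ?thesis by (simp add: power2_eq_1_iff)
qed

lemma geometric_eq_1_consecutive:
  fixes c u :: "'a::field"
  assumes "c * u ^ k = 1" and "c * u ^ Suc k = 1"
  shows "c * u ^ n = 1"
proof -
  have "u = (c * u ^ k) * u" using assms(1) by simp
  also have "\<dots> = 1" using assms(2) by (simp add: mult_ac)
  finally have "u = 1" .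
  thus ?thesis using assms(1) by simp
qed

lemma geometric_eq_1_alternating:
  fixes c u :: "'a::field"
  assumes "c * u ^ k = 1" and "c * u ^ Suc k \<noteq> 1" and "c * u ^ Suc (Suc k) = 1"
  shows "u = -1"
proof -
  have "(c * u ^ k) * u ^ 2 = 1" using assms(3) by (simp add: power2_eq_square mult_ac)
  hence "u ^ 2 = 1" using assms(1) by simp
  moreover have "u \<noteq> 1" using assms(1,2) by auto
  ultimately show ?thesis by (simp add: power2_eq_1_iff)
qed

lemma alternating_iff_even:
  assumes "\<And>k. A (Suc k) \<longleftrightarrow> \<not> A k"
  shows "A k \<longleftrightarrow> (A 0 \<longleftrightarrow> even k)"
  by (induction k) (simp_all add: assms)

locale Lk_family =
  fixes q d :: nat and eps a b :: "'a::field_gcd" and r :: int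
    and j1 j2 :: nat and tau :: "nat \<Rightarrow> nat" and lam :: "nat \<Rightarrow> 'a"
  assumes d_pos: "d > 0" and q_eq: "q + 1 = 3 * d"
    and eps: "has_mult_order eps d"
    and b_nz: "b \<noteq> 0"
    and tau_range: "\<And>k. k < d \<Longrightarrow> tau k \<in> {0, 1, 2}"
    and L_in_Lset: "\<And>k. k < d \<Longrightarrow>
      [:1, a * eps ^ (j1 * k), b * eps ^ (j2 * k):] \<in> Lset q d eps k 2 (tau k) (lam k)"
    and e_coprime_3: "\<And>k. k < d \<Longrightarrow> gcd (r - 2 + int (tau k)) 3 = 1"
    and tau_0_ex: "\<exists>k<d. tau k = 0" and tau_2_ex: "\<exists>k<d. tau k = 2"
begin

text \<open>The coefficients and the two relations are defined for all k, not only k < d; being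
  d-periodic, they can be compared at consecutive indices without wrapping around.\<close>

definition \<alpha> :: "nat \<Rightarrow> 'a" where "\<alpha> k = a * eps ^ (j1 * k)"
definition \<beta> :: "nat \<Rightarrow> 'a" where "\<beta> k = b * eps ^ (j2 * k)"

definition tau0_rel :: "nat \<Rightarrow> bool" where "tau0_rel k \<longleftrightarrow> \<beta> k = \<alpha> k ^ 2"
definition tau2_rel :: "nat \<Rightarrow> bool" where "tau2_rel k \<longleftrightarrow> \<alpha> k * \<beta> k * eps ^ k = 1"

lemma L_in_Lset_alpha_beta:
  "k < d \<Longrightarrow> [:1, \<alpha> k, \<beta> k:] \<in> Lset q d eps k 2 (tau k) (lam k)"
  unfolding \<alpha>_def \<beta>_def by (rule L_in_Lset)

lemma eps_nz: "eps \<noteq> 0"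
  using eps by (auto simp: has_mult_order_def zero_power)

lemma beta_nz: "\<beta> k \<noteq> 0"
  by (simp add: \<beta>_def b_nz eps_nz)

lemma N_eq_3: "(q + 1) div d = 3"
  using q_eq d_pos by simp

lemma not_3_dvd_e: "k < d \<Longrightarrow> \<not> 3 dvd (r - 2 + int (tau k))"
  using e_coprime_3 gcd_proj2_if_dvd_int by fastforce

lemma r_mod_3: "r mod 3 = 1"
proof -
  obtain k0 k2 where "k0 < d" "tau k0 = 0" "k2 < d" "tau k2 = 2"
    using tau_0_ex tau_2_ex by blast
  with not_3_dvd_e[of k0] not_3_dvd_e[of k2] show ?thesis by simp presburger
qed

lemma tau_0_or_2: "k < d \<Longrightarrow> tau k = 0 \<or> tau k = 2"
  using tau_range[of k] not_3_dvd_e[of k] r_mod_3 by auto presburger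

lemma power_q1_twist: "(c * eps ^ m) ^ (q + 1) = c ^ (q + 1)"
proof -
  have "eps ^ (q + 1) = 1"
    using eps q_eq by (simp add: has_mult_order_power_eq_1_iff)
  have "(c * eps ^ m) ^ (q + 1) = c ^ (q + 1) * (eps ^ (q + 1)) ^ m"
    by (simp only: power_mult_distrib flip: power_mult) (simp only: mult.commute)
  thus ?thesis using \<open>eps ^ (q + 1) = 1\<close> by simp
qed

lemma alpha_power_q1: "\<alpha> k ^ (q + 1) = a ^ (q + 1)"
  and beta_power_q1: "\<beta> k ^ (q + 1) = b ^ (q + 1)"
  unfolding \<alpha>_def \<beta>_def by (rule power_q1_twist)+

lemma b_power_q1: "b ^ (q + 1) = 1"
proof -
  obtain k where "k < d" "tau k = 0" using tau_0_ex by blast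
  hence "\<beta> k ^ (q + 1) = 1"
    using quadratic_Lset_tau0(2) L_in_Lset_alpha_beta beta_nz by metis
  thus ?thesis by (simp only: beta_power_q1)
qed

lemma a_power_q1: "a ^ (q + 1) = 1"
proof -
  obtain k where k: "k < d" "tau k = 2" using tau_2_ex by blast
  have "\<alpha> k * \<beta> k * eps ^ k = 1"
    using quadratic_Lset_tau2(2) L_in_Lset_alpha_beta[OF k(1)] k(2) N_eq_3 b_power_q1 beta_power_q1
    by metis
  hence "(\<alpha> k * (\<beta> k * eps ^ k)) ^ (q + 1) = 1" by (simp only: mult.assoc power_one)
  moreover have "(\<beta> k * eps ^ k) ^ (q + 1) = 1"
    by (simp only: power_q1_twist beta_power_q1 b_power_q1)
  ultimately have "\<alpha> k ^ (q + 1) = 1" by (simp only: power_mult_distrib mult_1_right)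
  thus ?thesis by (simp only: alpha_power_q1)
qed

lemma tau_0_imp:
  assumes "k < d" "tau k = 0"
  shows "tau0_rel k" and "lam k * \<beta> k = 1"
proof -
  have L: "[:1, \<alpha> k, \<beta> k:] \<in> Lset q d eps k 2 0 (lam k)"
    using L_in_Lset_alpha_beta assms by metis
  have "\<alpha> k ^ (q + 1) = 1" by (simp only: alpha_power_q1 a_power_q1)
  thus "tau0_rel k" unfolding tau0_rel_def by (rule quadratic_Lset_tau0(3)[OF L beta_nz])
  show "lam k * \<beta> k = 1" by (rule quadratic_Lset_tau0(1)[OF L beta_nz])
qed

lemma tau_2_imp:
  assumes "k < d" "tau k = 2"
  shows "tau2_rel k" and "lam k = 1"
proof -
  have L: "[:1, \<alpha> k, \<beta> k:] \<in> Lset q d eps k 2 2 (lam k)"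
    using L_in_Lset_alpha_beta assms by metis
  have "\<beta> k ^ (q + 1) = 1" by (simp only: beta_power_q1 b_power_q1)
  thus "tau2_rel k" unfolding tau2_rel_def by (rule quadratic_Lset_tau2(2)[OF L N_eq_3])
  show "lam k = 1" by (rule quadratic_Lset_tau2(1)[OF L N_eq_3])
qed

lemma not_tau0_rel_and_tau2_rel:
  assumes "k < d" shows "\<not> (tau0_rel k \<and> tau2_rel k)"
proof
  assume rels: "tau0_rel k \<and> tau2_rel k"
  have "\<alpha> k ^ 3 * eps ^ k = \<alpha> k * \<alpha> k ^ 2 * eps ^ k"
    by (simp add: power2_eq_square power3_eq_cube)
  also have "\<dots> = 1" using rels unfolding tau0_rel_def tau2_rel_def by metis
  finally have "\<alpha> k ^ 3 * eps ^ k = 1" .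
  moreover have "gcd [:1, \<alpha> k, \<beta> k:] (monom 1 3 - [:eps ^ k:]) = 1"
    using Lset_gcd_eq_1[OF L_in_Lset_alpha_beta[OF assms]] N_eq_3 by simp
  ultimately show False
    using quadratic_gcd_X3_minus_neq_1 rels unfolding tau0_rel_def by metis
qed

lemma eps_power_mult_mod: "eps ^ (m * (k mod d)) = eps ^ (m * k)"
  using has_mult_order_power_mod[OF eps, of "m * (k mod d)"] has_mult_order_power_mod[OF eps, of "m * k"]
  by (simp add: mod_mult_right_eq)

lemma alpha_mod: "\<alpha> (k mod d) = \<alpha> k" and beta_mod: "\<beta> (k mod d) = \<beta> k"
  and eps_power_mod: "eps ^ (k mod d) = eps ^ k"
  using eps_power_mult_mod[of 1] by (simp_all add: \<alpha>_def \<beta>_def eps_power_mult_mod)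

lemma tau0_rel_mod: "tau0_rel (k mod d) \<longleftrightarrow> tau0_rel k"
  and tau2_rel_mod: "tau2_rel (k mod d) \<longleftrightarrow> tau2_rel k"
  by (simp_all add: tau0_rel_def tau2_rel_def alpha_mod beta_mod eps_power_mod)

lemma tau0_rel_xor_tau2_rel: "tau2_rel k \<longleftrightarrow> \<not> tau0_rel k"
proof -
  have "k mod d < d" using d_pos by simp
  thus ?thesis
    using tau_0_or_2 tau_0_imp(1) tau_2_imp(1) not_tau0_rel_and_tau2_rel
    by (metis tau0_rel_mod tau2_rel_mod)
qed

lemma tau0_rel_geometric: "tau0_rel k \<longleftrightarrow> a ^ 2 / b * (eps ^ (2 * j1) / eps ^ j2) ^ k = 1"
proof -
  have "\<alpha> k ^ 2 / \<beta> k = a ^ 2 / b * (eps ^ (2 * j1) / eps ^ j2) ^ k"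
    by (simp add: \<alpha>_def \<beta>_def power_mult_distrib power_divide flip: power_mult)
      (simp add: mult_ac)
  thus ?thesis using beta_nz[of k] by (auto simp: tau0_rel_def divide_eq_1_iff)
qed

lemma tau2_rel_geometric: "tau2_rel k \<longleftrightarrow> a * b * (eps ^ (j1 + j2 + 1)) ^ k = 1"
proof -
  have "\<alpha> k * \<beta> k * eps ^ k = a * b * (eps ^ (j1 + j2 + 1)) ^ k"
    by (simp add: \<alpha>_def \<beta>_def algebra_simps power_add flip: power_mult)
  thus ?thesis by (simp add: tau2_rel_def)
qed

lemma tau0_rel_Suc_iff: "tau0_rel (Suc k) \<longleftrightarrow> \<not> tau0_rel k"
proof -
  obtain k0 k2 where k0: "k0 < d" "tau k0 = 0" and k2: "k2 < d" "tau k2 = 2"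
    using tau_0_ex tau_2_ex by blast
  have "\<not> (tau0_rel k \<and> tau0_rel (Suc k))"
  proof
    assume "tau0_rel k \<and> tau0_rel (Suc k)"
    hence "tau0_rel k2" unfolding tau0_rel_geometric by (metis geometric_eq_1_consecutive)
    thus False using tau_2_imp(1)[OF k2] tau0_rel_xor_tau2_rel by simp
  qed
  moreover have "\<not> (tau2_rel k \<and> tau2_rel (Suc k))"
  proof
    assume "tau2_rel k \<and> tau2_rel (Suc k)"
    hence "tau2_rel k0" unfolding tau2_rel_geometric by (metis geometric_eq_1_consecutive)
    thus False using tau_0_imp(1)[OF k0] tau0_rel_xor_tau2_rel by simp
  qed
  ultimately show ?thesis using tau0_rel_xor_tau2_rel by blast
qed

lemma tau0_rel_iff_even: "tau0_rel k \<longleftrightarrow> (tau0_rel 0 \<longleftrightarrow> even k)"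
  by (rule alternating_iff_even[of tau0_rel, OF tau0_rel_Suc_iff])

lemma even_d: "even d"
  using tau0_rel_iff_even[of d] tau0_rel_mod[of d] by (cases "tau0_rel 0") simp_all

lemma eps_ratio_eq_minus_1: "eps ^ (2 * j1) / eps ^ j2 = -1"
proof -
  obtain k where "k < d" "tau k = 0" using tau_0_ex by blast
  hence "tau0_rel k" "\<not> tau0_rel (Suc k)" "tau0_rel (Suc (Suc k))"
    using tau_0_imp(1) tau0_rel_Suc_iff by auto
  thus ?thesis unfolding tau0_rel_geometric by (rule geometric_eq_1_alternating)
qed

lemma eps_power_j1_j2_eq_minus_1: "eps ^ (j1 + j2 + 1) = -1"
proof -
  obtain k where "k < d" "tau k = 2" using tau_2_ex by blast
  hence "tau2_rel k" "\<not> tau2_rel (Suc k)" "tau2_rel (Suc (Suc k))"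
    using tau_2_imp(1) tau0_rel_Suc_iff tau0_rel_xor_tau2_rel by auto
  thus ?thesis unfolding tau2_rel_geometric by (rule geometric_eq_1_alternating)
qed

lemma eps_power_3j1: "eps ^ (3 * j1 + 1) = 1"
proof -
  have "eps ^ (3 * j1 + 1) * eps ^ j2 = eps ^ (2 * j1) * eps ^ (j1 + j2 + 1)"
    by (simp only: power_add[symmetric]) (simp add: algebra_simps)
  also have "\<dots> = eps ^ j2"
    using eps_ratio_eq_minus_1 eps_power_j1_j2_eq_minus_1 eps_nz by (simp add: divide_eq_eq)
  finally show ?thesis using eps_nz by simp
qed

lemma a_cube: "a ^ 3 = -1" and b_eq_pm_a_square: "b = a ^ 2 \<or> b = - (a ^ 2)"
proof -
  have rel0: "tau0_rel 0 \<longleftrightarrow> b = a ^ 2" "tau2_rel 0 \<longleftrightarrow> a * b = 1"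
    by (simp_all add: tau0_rel_def tau2_rel_def \<alpha>_def \<beta>_def)
  have "tau0_rel 1 \<longleftrightarrow> a ^ 2 / b * -1 = 1" "tau2_rel 1 \<longleftrightarrow> a * b * -1 = 1"
    by (simp_all only: tau0_rel_geometric tau2_rel_geometric power_one_right
        eps_ratio_eq_minus_1 eps_power_j1_j2_eq_minus_1)
  hence rel1: "tau0_rel 1 \<longleftrightarrow> b = - (a ^ 2)" "tau2_rel 1 \<longleftrightarrow> a * b = -1"
    using b_nz by (auto simp: field_simps, auto simp: minus_equation_iff)
  have "tau0_rel 1 \<longleftrightarrow> \<not> tau0_rel 0" "tau2_rel 1 \<longleftrightarrow> tau0_rel 0" "tau2_rel 0 \<longleftrightarrow> \<not> tau0_rel 0"
    using tau0_rel_Suc_iff[of 0] tau0_rel_xor_tau2_rel by auto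
  hence "(b = a ^ 2 \<and> a * b = -1) \<or> (b = - (a ^ 2) \<and> a * b = 1)"
    using rel0 rel1 by blast
  thus "a ^ 3 = -1" "b = a ^ 2 \<or> b = - (a ^ 2)"
    by (auto simp: power2_eq_square power3_eq_cube mult_ac minus_equation_iff)
qed

lemma cong_2j1_j2: "[2 * int j1 - int j2 = int d div 2] (mod int d)"
proof -
  have "eps ^ (2 * j1) = eps ^ (d div 2 + j2)"
    using eps_ratio_eq_minus_1 has_mult_order_power_half[OF eps even_d] eps_nz
    by (simp add: power_add divide_eq_eq)
  hence "[int (2 * j1) = int (d div 2 + j2)] (mod int d)"
    unfolding has_mult_order_power_eq_power_iff[OF eps] .
  thus ?thesis by (simp add: cong_iff_dvd_diff zdiv_int algebra_simps)
qed

lemma cong_j1_j2_1: "[int j1 + int j2 + 1 = int d div 2] (mod int d)"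
proof -
  have "eps ^ (j1 + j2 + 1) = eps ^ (d div 2)"
    using eps_power_j1_j2_eq_minus_1 has_mult_order_power_half[OF eps even_d] by simp
  hence "[int (j1 + j2 + 1) = int (d div 2)] (mod int d)"
    unfolding has_mult_order_power_eq_power_iff[OF eps] .
  thus ?thesis by (simp add: zdiv_int add_ac)
qed

lemma alpha_cube: "\<alpha> k ^ 3 * eps ^ k = -1"
proof -
  have "\<alpha> k ^ 3 * eps ^ k = a ^ 3 * (eps ^ (3 * j1 + 1)) ^ k"
    by (simp add: \<alpha>_def power_mult_distrib power_add algebra_simps flip: power_mult)
  thus ?thesis unfolding eps_power_3j1 a_cube by simp
qed

lemma lam_cube_cong:
  assumes "k < d" and "lam k ^ 3 = eps ^ p"
  shows "[int p + (r - 2 + int (tau k)) * int k = r * int k] (mod int d)"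
proof (cases "tau k = 0")
  case True
  have "lam k ^ 3 = lam k ^ 3 * (\<alpha> k ^ 3 * eps ^ k) ^ 2" by (simp add: alpha_cube)
  also have "\<dots> = (lam k * \<beta> k) ^ 3 * (eps ^ k) ^ 2"
    using tau_0_imp(1)[OF assms(1) True] unfolding tau0_rel_def by (simp add: algebra_simps flip: power_mult)
  also have "\<dots> = eps ^ (k * 2)"
    using tau_0_imp(2)[OF assms(1) True] by (simp add: power_mult)
  finally have "[int p = int (k * 2)] (mod int d)"
    using assms(2) has_mult_order_power_eq_power_iff[OF eps] by simp
  thus ?thesis using True by (simp add: cong_iff_dvd_diff algebra_simps)
next
  case False
  hence "tau k = 2" using tau_0_or_2[OF assms(1)] by simp
  hence "eps ^ p = 1" using assms tau_2_imp(2) by simp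
  hence "int d dvd int p" by (simp add: has_mult_order_power_eq_1_iff[OF eps])
  thus ?thesis using \<open>tau k = 2\<close> by (simp add: cong_iff_dvd_diff)
qed

lemma tau_eq_0_iff: "k < d \<Longrightarrow> tau k = 0 \<longleftrightarrow> tau0_rel k"
  using tau_0_or_2 tau_0_imp(1) tau_2_imp(1) tau0_rel_xor_tau2_rel by blast

lemma tau_parity:
  "({k. k < d \<and> tau k = 0} = {k. k < d \<and> even k} \<and> {k. k < d \<and> tau k = 2} = {k. k < d \<and> odd k}) \<or>
   ({k. k < d \<and> tau k = 0} = {k. k < d \<and> odd k} \<and> {k. k < d \<and> tau k = 2} = {k. k < d \<and> even k})"
proof -
  have "k < d \<Longrightarrow> tau k = 0 \<longleftrightarrow> (tau0_rel 0 \<longleftrightarrow> even k)"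
    and "k < d \<Longrightarrow> tau k = 2 \<longleftrightarrow> \<not> (tau0_rel 0 \<longleftrightarrow> even k)" for k
    using tau_eq_0_iff[of k] tau_0_or_2[of k] tau0_rel_iff_even[of k] by auto
  thus ?thesis unfolding set_eq_iff mem_Collect_eq by (cases "tau0_rel 0"; blast)
qed

lemma d_dvd_3j1: "d dvd 3 * j1 + 1"
  using eps_power_3j1 unfolding has_mult_order_power_eq_1_iff[OF eps] .

end

lemma q_mod_18_exponents:
  fixes q d j1 j2 :: nat
  assumes q: "q + 1 = 3 * d" and "even d" and dvd: "d dvd 3 * j1 + 1"
    and j: "j1 < d" "j2 < d" and cong: "[2 * int j1 - int j2 = int d div 2] (mod int d)"
  shows "(q mod 18 = 11 \<and> 1 + 3 * j1 = (q + 1) div 3 \<and> 2 + 3 * j2 = (q + 1) div 6) \<or>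
         (q mod 18 = 5 \<and> 1 + 3 * j1 = 2 * (q + 1) div 3 \<and> 2 + 3 * j2 = 5 * (q + 1) div 6)"
proof -
  obtain h where dh: "d = 2 * h" using \<open>even d\<close> by (elim evenE)
  obtain m where m: "3 * j1 + 1 = d * m" using dvd by (elim dvdE)
  have "m \<noteq> 0" using m by (intro notI) simp
  moreover have "m < 3"
  proof (rule ccontr)
    assume "\<not> m < 3"
    hence "d * 3 \<le> d * m" by simp
    thus False using m j by linarith
  qed
  ultimately have j1_cases: "3 * j1 + 1 = 2 * h \<or> 3 * j1 + 1 = 4 * h"
    using m dh by (auto simp: less_Suc_eq numeral_3_eq_3)
  have "int d dvd 2 * int j1 - int j2 - int h"
    using cong dh by (simp add: cong_iff_dvd_diff)
  moreover have "\<bar>2 * int j1 - int j2 - int h\<bar> < int d"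
    using j1_cases j dh by linarith
  ultimately have j2: "2 * j1 = j2 + h"
    using dvd_imp_le_int[of "2 * int j1 - int j2 - int h" "int d"] by fastforce
  from j1_cases show ?thesis
  proof
    assume e: "3 * j1 + 1 = 2 * h"
    hence "\<exists>t. j1 = 2 * t + 1" by presburger
    then obtain t where t: "j1 = 2 * t + 1" ..
    hence "j2 = t" "q = 18 * t + 11" using e j2 q dh by linarith+
    thus ?thesis using t by simp
  next
    assume e: "3 * j1 + 1 = 4 * h"
    hence "\<exists>t. j1 = 4 * t + 1" by presburger
    then obtain t where t: "j1 = 4 * t + 1" ..
    hence "j2 = 5 * t + 1" "q = 18 * t + 5" using e j2 q dh by linarith+
    thus ?thesis using t by simp
  qed
qed

theorem lemma4p8:
  fixes q d :: nat and eps a b :: "'a::{field_gcd,finite}" and r :: int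
    and j1 j2 :: nat and tau :: "nat \<Rightarrow> nat" and lam :: "nat \<Rightarrow> 'a"
  assumes q_pp: "\<exists>p m. prime p \<and> m > 0 \<and> q = p ^ m"
    and card: "card (UNIV :: 'a set) = q ^ 2"
    and d_pos: "d > 0" and d_dvd: "d dvd q + 1" and N3: "(q + 1) div d = 3"
    and eps: "has_mult_order eps d"
    and ab: "a \<noteq> 0" "b \<noteq> 0"
    and j: "j1 < d" "j2 < d"
    and hyp: "\<forall>k<d. tau k \<in> {0, 1, 2} \<and> lam k \<in> mu (q + 1) \<and>
               [:1, a * eps ^ (j1 * k), b * eps ^ (j2 * k):] \<in> Lset q d eps k 2 (tau k) (lam k) \<and>
               gcd (r - 2 + int (tau k)) 3 = 1"
    and K0: "{k. k < d \<and> tau k = 0} \<noteq> {}"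
    and K1: "{k. k < d \<and> tau k = 2} \<noteq> {}"
  shows "[r = 1] (mod 3) \<and> even d \<and>
    (({k. k < d \<and> tau k = 0} = {k. k < d \<and> even k} \<and> {k. k < d \<and> tau k = 2} = {k. k < d \<and> odd k}) \<or>
     ({k. k < d \<and> tau k = 0} = {k. k < d \<and> odd k} \<and> {k. k < d \<and> tau k = 2} = {k. k < d \<and> even k})) \<and>
    a ^ 3 = -1 \<and> (b = a ^ 2 \<or> b = - (a ^ 2)) \<and>
    [2 * int j1 - int j2 = int d div 2] (mod int d) \<and>
    [int j1 + int j2 + 1 = int d div 2] (mod int d) \<and>
    (\<forall>k<d. \<forall>p::nat. lam k ^ 3 = eps ^ p \<longrightarrow>
        [int p + (r - 2 + int (tau k)) * int k = r * int k] (mod int d)) \<and>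
    ((q mod 18 = 11 \<and>
        1 + monom a (1 + 3 * j1) + monom b (2 + 3 * j2) =
        1 + monom a ((q + 1) div 3) + monom b ((q + 1) div 6)) \<or>
     (q mod 18 = 5 \<and>
        1 + monom a (1 + 3 * j1) + monom b (2 + 3 * j2) =
        1 + monom a (2 * (q + 1) div 3) + monom b (5 * (q + 1) div 6)))"
proof -
  have q_eq: "q + 1 = 3 * d" using d_dvd N3 by (metis dvd_mult_div_cancel mult.commute)
  interpret Lk_family q d eps a b r j1 j2 tau lam
    using d_pos q_eq eps ab hyp K0 K1 by unfold_locales blast+
  have "[r = 1] (mod 3)" using r_mod_3 by (simp add: cong_def)
  moreover have "(q mod 18 = 11 \<and> 1 + 3 * j1 = (q + 1) div 3 \<and> 2 + 3 * j2 = (q + 1) div 6) \<or>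
      (q mod 18 = 5 \<and> 1 + 3 * j1 = 2 * (q + 1) div 3 \<and> 2 + 3 * j2 = 5 * (q + 1) div 6)"
    by (rule q_mod_18_exponents[OF q_eq even_d d_dvd_3j1 j cong_2j1_j2])
  ultimately show ?thesis
    using even_d tau_parity a_cube b_eq_pm_a_square cong_2j1_j2 cong_j1_j2_1 lam_cube_cong
    by auto
qed

end
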